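(* Let $X$ be a real Hausdorff locally convex topological vector space, let $f:X\to\overline{\mathbb R}$ be proper, convex and lower semicontinuous, and let $U\subseteq\operatorname{dom} f$ be segment-dense in $\operatorname{dom} f$. Then $f=\overline{f_U}$ on $X$ and $\inf_{x\in U}f(x)=\inf_{x\in X}f(x)$.
   Context: $\overline{\mathbb R}=\mathbb R\cup\{\pm\infty\}$; $\operatorname{dom} f=\{x:f(x)<+\infty\}$; proper: $\operatorname{dom} f\ne\emptyset$ and $f>-\infty$. $\operatorname{epi} f_U=\{(u,r)\in U\times\mathbb R:f(u)\le r\}$ and $\overline{f_U}:X\to\overline{\mathbb R}$ is the function whose epigraph is $\operatorname{cl}(\operatorname{epi} f_U)$ in $X\times\mathbb R$, i.e. $\overline{f_U}(x)=\inf\{r:(x,r)\in\operatorname{cl}(\operatorname{epi} f_U)\}$ ($\inf\emptyset=+\infty$). $[x,y]=\{x+t(y-x):t\in[0,1]\}$. Segment-dense: for convex $V$ and $U\subseteq V$, $U$ is segment-dense in $V$ if for each $x\in V$ there exists $y\in U$ such that $x$ is a cluster point of $[x,y]\cap U$. *)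

theory Defs
  imports "HOL-Analysis.Analysis"
begin

definition lc_tvs :: "'a::{real_vector,t2_space} itself \<Rightarrow> bool" where
  "lc_tvs _ \<longleftrightarrow>
     continuous_on UNIV (\<lambda>p::'a \<times> 'a. fst p + snd p) \<and>
     continuous_on UNIV (\<lambda>p::real \<times> 'a. fst p *\<^sub>R snd p) \<and>
     (\<forall>(x::'a) W. open W \<and> x \<in> W \<longrightarrow> (\<exists>V. open V \<and> convex V \<and> x \<in> V \<and> V \<subseteq> W))"

definition edom :: "('a \<Rightarrow> ereal) \<Rightarrow> 'a set" where
  "edom f = {x. f x < \<infinity>}"

definition proper_fun :: "('a \<Rightarrow> ereal) \<Rightarrow> bool" where
  "proper_fun f \<longleftrightarrow> edom f \<noteq> {} \<and> (\<forall>x. f x > -\<infinity>)"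

definition epi_on :: "('a \<Rightarrow> ereal) \<Rightarrow> 'a set \<Rightarrow> ('a \<times> real) set" where
  "epi_on f U = {(u, r). u \<in> U \<and> f u \<le> ereal r}"

definition econvex :: "('a::real_vector \<Rightarrow> ereal) \<Rightarrow> bool" where
  "econvex f \<longleftrightarrow> convex (epi_on f UNIV)"

definition elsc :: "('a::topological_space \<Rightarrow> ereal) \<Rightarrow> bool" where
  "elsc f \<longleftrightarrow> (\<forall>c. closed {x. f x \<le> c})"

text \<open>The function whose epigraph is the closure of epi f_U in X \<times> \<real>.\<close>
definition closure_fun :: "('a::topological_space \<Rightarrow> ereal) \<Rightarrow> 'a set \<Rightarrow> 'a \<Rightarrow> ereal" where
  "closure_fun f U x = Inf {ereal r | r. (x, r) \<in> closure (epi_on f U)}"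

definition segment_dense :: "'a::{real_vector,topological_space} set \<Rightarrow> 'a set \<Rightarrow> bool" where
  "segment_dense U V \<longleftrightarrow> U \<subseteq> V \<and>
     (\<forall>x\<in>V. \<exists>y\<in>U. x islimpt (closed_segment x y \<inter> U))"

end

theory Submission
  imports Defs
begin

text \<open>Let \<open>f x < r\<close> and pick \<open>y \<in> U\<close> with \<open>x\<close> a cluster point of \<open>[x, y] \<inter> U\<close>. Points
  \<open>(1 - t) x + t y\<close> of \<open>U\<close> with arbitrarily small \<open>t > 0\<close> exist in every neighbourhood of \<open>x\<close>,
  since the compact piece \<open>{(1 - t) x + t y | t \<ge> \<delta>}\<close> of the segment is closed and misses \<open>x\<close>.
  By convexity \<open>f ((1 - t) x + t y) \<le> (1 - t) f x + t f y\<close>, which is below \<open>r\<close> for small \<open>t\<close>.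
  Hence \<open>(x, r)\<close> lies in the closure of \<open>epi f\<^sub>U\<close> and \<open>inf\<^sub>U f \<le> r\<close>; conversely that closure
  is contained in the epigraph of \<open>f\<close>, which is closed by lower semicontinuity.\<close>

lemma ereal_le_if_le_all_greater:
  fixes x y :: ereal
  assumes "\<And>r. x < ereal r \<Longrightarrow> y \<le> ereal r"
  shows "y \<le> x"
proof (rule dense_ge)
  fix w assume "x < w"
  then obtain r where "x < ereal r" "ereal r < w" using ereal_dense2 by blast
  then show "y \<le> w" using assms by (meson order.strict_implies_order order_trans)
qed

lemma lc_tvs_continuous_on_segment_map:
  fixes x y :: "'a::{real_vector,t2_space}"
  assumes "lc_tvs TYPE('a)"
  shows "continuous_on S (\<lambda>t::real. (1 - t) *\<^sub>R x + t *\<^sub>R y)"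
proof -
  have add: "continuous_on UNIV (\<lambda>p::'a \<times> 'a. fst p + snd p)"
   and scale: "continuous_on UNIV (\<lambda>p::real \<times> 'a. fst p *\<^sub>R snd p)"
    using assms unfolding lc_tvs_def by auto
  have compose: "continuous_on UNIV (\<lambda>t. h (g t))"
    if "continuous_on UNIV h" "continuous_on UNIV g" for h g :: "_ \<Rightarrow> _"
    using continuous_on_compose2[OF that(1,2)] by simp
  have "continuous_on UNIV (\<lambda>t::real. (1 - t) *\<^sub>R x)"
    using compose[OF scale, of "\<lambda>t. (1 - t, x)"] by (simp add: continuous_intros)
  moreover have "continuous_on UNIV (\<lambda>t::real. t *\<^sub>R y)"
    using compose[OF scale, of "\<lambda>t. (t, y)"] by (simp add: continuous_intros)
  ultimately have "continuous_on UNIV (\<lambda>t::real. (1 - t) *\<^sub>R x + t *\<^sub>R y)"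
    using compose[OF add, of "\<lambda>t. ((1 - t) *\<^sub>R x, t *\<^sub>R y)"] by (simp add: continuous_on_Pair)
  then show ?thesis by (rule continuous_on_subset) simp
qed

lemma islimpt_segment_obtains_near_start:
  fixes x y :: "'a::{real_vector,t2_space}"
  assumes "lc_tvs TYPE('a)" and "x islimpt (closed_segment x y \<inter> S)"
    and "0 < \<delta>" and "open A" and "x \<in> A"
  obtains t where "0 \<le> t" "t < \<delta>" "(1 - t) *\<^sub>R x + t *\<^sub>R y \<in> S \<inter> A"
proof -
  define g where "g = (\<lambda>t::real. (1 - t) *\<^sub>R x + t *\<^sub>R y)"
  define K where "K = g ` {\<delta>..1}"
  have "y \<noteq> x"
  proof
    assume "y = x"
    then have "x islimpt {x}"
      using assms(2) islimpt_subset[of x "closed_segment x y \<inter> S" "{x}"] by auto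
    then show False using open_UNIV by (auto simp: islimpt_def)
  qed
  have "closed K"
    unfolding K_def g_def
    by (intro compact_imp_closed compact_continuous_image lc_tvs_continuous_on_segment_map assms(1))
       simp
  moreover have "x \<notin> K"
  proof
    assume "x \<in> K"
    then obtain t where "\<delta> \<le> t" "t *\<^sub>R (y - x) = 0"
      unfolding K_def g_def by (auto simp: algebra_simps)
    with \<open>y \<noteq> x\<close> \<open>0 < \<delta>\<close> show False by simp
  qed
  ultimately have "open (A - K)" "x \<in> A - K" using assms(4,5) by auto
  then obtain z where z: "z \<in> closed_segment x y \<inter> S" "z \<in> A - K"
    using assms(2) unfolding islimpt_def by blast
  then obtain t where t: "0 \<le> t" "t \<le> 1" "z = g t"
    unfolding closed_segment_def g_def by auto
  have "t < \<delta>"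
  proof (rule ccontr)
    assume "\<not> t < \<delta>"
    then have "z \<in> K" unfolding K_def using t by auto
    with z show False by blast
  qed
  with t z show thesis using that unfolding g_def by blast
qed

lemma econvex_combination_le:
  assumes "econvex f" and "f x \<le> ereal a" and "f y \<le> ereal b" and "0 \<le> t" "t \<le> 1"
  shows "f ((1 - t) *\<^sub>R x + t *\<^sub>R y) \<le> ereal ((1 - t) * a + t * b)"
proof -
  have "(x, a) \<in> epi_on f UNIV" "(y, b) \<in> epi_on f UNIV"
    using assms(2,3) unfolding epi_on_def by auto
  then have "(1 - t) *\<^sub>R (x, a) + t *\<^sub>R (y, b) \<in> epi_on f UNIV"
    using assms(1,4,5) unfolding econvex_def by (intro convexD) auto
  then show ?thesis unfolding epi_on_def by simp
qed

lemma elsc_closed_epi_on: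
  fixes f :: "'a::topological_space \<Rightarrow> ereal"
  assumes "elsc f"
  shows "closed (epi_on f UNIV)"
  unfolding closed_def
proof (rule Topological_Spaces.openI)
  fix p assume "p \<in> - epi_on f UNIV"
  then obtain u s where p: "p = (u, s)" and "ereal s < f u"
    unfolding epi_on_def by (cases p) auto
  then obtain c where "ereal s < ereal c" "ereal c < f u" using ereal_dense2 by blast
  then have c: "s < c" "ereal c < f u" by simp_all
  let ?T = "(- {v. f v \<le> ereal c}) \<times> {..<c}"
  have "open ?T"
    using assms unfolding elsc_def by (intro open_Times) auto
  moreover have "p \<in> ?T" using p c by auto
  moreover have "?T \<subseteq> - epi_on f UNIV"
  proof
    fix q assume "q \<in> ?T"
    then obtain v w where q: "q = (v, w)" "ereal c < f v" "w < c"
      by (cases q) (auto simp: not_le)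
    then have "ereal w < f v" using less_trans[of "ereal w" "ereal c"] by simp
    then show "q \<in> - epi_on f UNIV" using q(1) unfolding epi_on_def by auto
  qed
  ultimately show "\<exists>T. open T \<and> p \<in> T \<and> T \<subseteq> - epi_on f UNIV" by blast
qed

lemma segment_dense_sublevel_near:
  fixes f :: "'a::{real_vector,t2_space} \<Rightarrow> ereal"
  assumes "lc_tvs TYPE('a)" and "econvex f" and "segment_dense U (edom f)"
    and "f x < ereal r" and "open A" and "x \<in> A"
  shows "\<exists>z\<in>U \<inter> A. f z \<le> ereal r"
proof -
  obtain a where "f x < ereal a" "ereal a < ereal r"
    using ereal_dense2[OF assms(4)] by blast
  then have a: "f x \<le> ereal a" "a < r" by auto
  have "x \<in> edom f" using assms(4) unfolding edom_def by auto
  then obtain y where "y \<in> U" and lim: "x islimpt (closed_segment x y \<inter> U)"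
    using assms(3) unfolding segment_dense_def by auto
  then have "f y < \<infinity>" using assms(3) unfolding segment_dense_def edom_def by auto
  then obtain b where b: "f y \<le> ereal b" by (cases "f y") auto
  define \<delta> where "\<delta> = min 1 ((r - a) / (\<bar>b - a\<bar> + 1))"
  have "0 < \<delta>" using a unfolding \<delta>_def by auto
  then obtain t where t: "0 \<le> t" "t < \<delta>" and z: "(1 - t) *\<^sub>R x + t *\<^sub>R y \<in> U \<inter> A"
    using islimpt_segment_obtains_near_start[OF assms(1) lim _ assms(5,6)] by blast
  have "t < (r - a) / (\<bar>b - a\<bar> + 1)" using t unfolding \<delta>_def by simp
  then have "t * (\<bar>b - a\<bar> + 1) < r - a" by (simp add: pos_less_divide_eq)
  moreover have "t * (b - a) \<le> t * (\<bar>b - a\<bar> + 1)" using t by (intro mult_left_mono) auto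
  ultimately have convex_bound_le: "(1 - t) * a + t * b \<le> r" by (simp add: algebra_simps)
  have "f ((1 - t) *\<^sub>R x + t *\<^sub>R y) \<le> ereal ((1 - t) * a + t * b)"
    using t econvex_combination_le[OF assms(2) a(1) b] unfolding \<delta>_def by simp
  also have "\<dots> \<le> ereal r" using convex_bound_le by simp
  finally show ?thesis using z by blast
qed

lemma closure_epi_on_subset_epi:
  assumes "elsc f"
  shows "closure (epi_on f U) \<subseteq> epi_on f UNIV"
  by (rule closure_minimal[OF _ elsc_closed_epi_on[OF assms]]) (auto simp: epi_on_def)

lemma le_closure_fun:
  assumes "elsc f"
  shows "f x \<le> closure_fun f U x"
  unfolding closure_fun_def
proof (rule Inf_greatest)
  fix v assume "v \<in> {ereal r |r. (x, r) \<in> closure (epi_on f U)}"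
  then obtain r where "v = ereal r" "(x, r) \<in> epi_on f UNIV"
    using closure_epi_on_subset_epi[OF assms] by blast
  then show "f x \<le> v" unfolding epi_on_def by simp
qed

lemma segment_dense_in_closure_epi_on:
  fixes f :: "'a::{real_vector,t2_space} \<Rightarrow> ereal"
  assumes "lc_tvs TYPE('a)" and "econvex f" and "segment_dense U (edom f)"
    and "f x < ereal r"
  shows "(x, r) \<in> closure (epi_on f U)"
  unfolding closure_iff_nhds_not_empty
proof (intro allI impI)
  fix W S assume SW: "S \<subseteq> W" "open S" "(x, r) \<in> S"
  obtain A B where AB: "open A" "x \<in> A" "r \<in> B" "A \<times> B \<subseteq> S"
    using open_prod_elim[OF SW(2,3)] by (metis mem_Times_iff fst_conv snd_conv)
  obtain z where "z \<in> U \<inter> A" "f z \<le> ereal r"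
    using segment_dense_sublevel_near[OF assms AB(1,2)] by blast
  with AB SW have "(z, r) \<in> epi_on f U \<inter> W" unfolding epi_on_def by blast
  then show "epi_on f U \<inter> W \<noteq> {}" by blast
qed

lemma segment_dense_closure_fun_le:
  fixes f :: "'a::{real_vector,t2_space} \<Rightarrow> ereal"
  assumes "lc_tvs TYPE('a)" and "econvex f" and "segment_dense U (edom f)"
  shows "closure_fun f U x \<le> f x"
proof (rule ereal_le_if_le_all_greater)
  fix r assume "f x < ereal r"
  then have "ereal r \<in> {ereal r |r. (x, r) \<in> closure (epi_on f U)}"
    using segment_dense_in_closure_epi_on[OF assms] by blast
  then show "closure_fun f U x \<le> ereal r"
    unfolding closure_fun_def by (rule Inf_lower)
qed

lemma segment_dense_INF_le:
  fixes f :: "'a::{real_vector,t2_space} \<Rightarrow> ereal"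
  assumes "lc_tvs TYPE('a)" and "econvex f" and "segment_dense U (edom f)"
  shows "(INF z\<in>U. f z) \<le> f x"
proof (rule ereal_le_if_le_all_greater)
  fix r assume "f x < ereal r"
  then obtain z where "z \<in> U" "f z \<le> ereal r"
    using segment_dense_sublevel_near[OF assms, of x r UNIV] by auto
  then show "(INF z\<in>U. f z) \<le> ereal r" by (rule INF_lower2)
qed

theorem mainTheorem7:
  fixes f :: "'a::{real_vector,t2_space} \<Rightarrow> ereal" and U :: "'a set"
  assumes "lc_tvs TYPE('a)"
    and "proper_fun f" and "econvex f" and "elsc f"
    and "U \<subseteq> edom f" and "segment_dense U (edom f)"
  shows "(\<forall>x. f x = closure_fun f U x) \<and> (INF x\<in>U. f x) = (INF x. f x)"
proof
  show "\<forall>x. f x = closure_fun f U x"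
    using le_closure_fun[OF assms(4)] segment_dense_closure_fun_le[OF assms(1,3,6)]
    by (simp add: order.antisym)
  have "(INF x\<in>U. f x) \<le> (INF x. f x)"
    using segment_dense_INF_le[OF assms(1,3,6)] by (rule INF_greatest)
  moreover have "(INF x. f x) \<le> (INF x\<in>U. f x)"
    by (rule INF_superset_mono) simp_all
  ultimately show "(INF x\<in>U. f x) = (INF x. f x)" by (rule antisym)
qed

end
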